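(* Let $n=5$ and let $T$ be a non-star tree metric on $5$ taxa, realized by a weighted tree with positive edge weights (and no vertices of degree $2$), and denote by $e_p$ the weight of the edge attached to leaf $p$. Then $T$ is a tropical mixture $D\oplus\bar D$ of two star tree metrics $D,\bar D$ if and only if $T$ has exactly one internal edge, of weight $g$, and $e_i,e_j>g$, where $i,j$ are the leaves of the unique cherry attached to one endpoint of the internal edge (the other three leaves being attached to the other endpoint). Moreover, the fiber over such a tree $T$ (the set of ordered pairs $(D,\bar D)$ of star tree metrics with $D\oplus\bar D=T$) is the union of four disjoint $\mathfrak{S}_2$-orbits of $2$-dimensional polygons of pairs $(D,\bar D)$, where $\mathfrak{S}_2$ acts by swapping $D$ and $\bar D$.
   Context: A weighted tree on $n$ taxa is a tree with leaves labeled $1,\dots,n$ and edge weights; its tree metric is $d(p,q)=$ sum of the weights along the path from $p$ to $q$. A star tree metric is the tree metric of a star tree (a single internal vertex adjacent to all $n$ leaves) all of whose edges have strictly positive weights, i.e. $D_{pq}=w_p+w_q$ for $p\neq q$ with all $w_p>0$. The tropical mixture of two such matrices is the entrywise maximum $(D\oplus\bar D)_{pq}=\max\{D_{pq},\bar D_{pq}\}$. A non-star tree metric is one whose realizing tree (with positive weights and no degree-2 vertices) has at least one internal edge. *)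

theory Defs
  imports "HOL-Analysis.Analysis"
begin

text \<open>Taxa are the 5 elements of the numeral type 5. Distance matrices are
  elements of real^5^5, so that the fiber lives in a Euclidean space.\<close>

definition star_metric :: "real^5^5 \<Rightarrow> bool" where
  "star_metric D \<longleftrightarrow> (\<exists>w::real^5. (\<forall>p. w$p > 0) \<and>
      (\<forall>p q. D$p$q = (if p = q then 0 else w$p + w$q)))"

definition tmix :: "real^5^5 \<Rightarrow> real^5^5 \<Rightarrow> real^5^5" where
  "tmix D Db = (\<chi> p q. max (D$p$q) (Db$p$q))"

definition spath :: "'v set set \<Rightarrow> 'v list \<Rightarrow> 'v \<Rightarrow> 'v \<Rightarrow> bool" where
  "spath E xs a b \<longleftrightarrow> xs \<noteq> [] \<and> hd xs = a \<and> last xs = b \<and> distinct xs \<and>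
     (\<forall>i. Suc i < length xs \<longrightarrow> {xs!i, xs!Suc i} \<in> E)"

definition is_tree :: "'v set \<Rightarrow> 'v set set \<Rightarrow> bool" where
  "is_tree V E \<longleftrightarrow> finite V \<and> V \<noteq> {} \<and>
     E \<subseteq> {{a, b} | a b. a \<in> V \<and> b \<in> V \<and> a \<noteq> b} \<and>
     (\<forall>a\<in>V. \<forall>b\<in>V. \<exists>!xs. spath E xs a b)"

definition vdegree :: "'v set set \<Rightarrow> 'v \<Rightarrow> nat" where
  "vdegree E v = card {e \<in> E. v \<in> e}"

definition weighted_phylo_tree ::
  "'v set \<Rightarrow> 'v set set \<Rightarrow> ('v set \<Rightarrow> real) \<Rightarrow> (5 \<Rightarrow> 'v) \<Rightarrow> bool" where
  "weighted_phylo_tree V E w leaf \<longleftrightarrow> is_tree V E \<and> inj leaf \<and> range leaf \<subseteq> V \<and>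
     (\<forall>p. vdegree E (leaf p) = 1) \<and>
     (\<forall>v \<in> V - range leaf. vdegree E v \<ge> 3) \<and>
     (\<forall>e\<in>E. w e > 0)"

definition path_length :: "('v set \<Rightarrow> real) \<Rightarrow> 'v list \<Rightarrow> real" where
  "path_length w xs = (\<Sum>i < length xs - 1. w {xs!i, xs!Suc i})"

definition realizes ::
  "'v set set \<Rightarrow> ('v set \<Rightarrow> real) \<Rightarrow> (5 \<Rightarrow> 'v) \<Rightarrow> real^5^5 \<Rightarrow> bool" where
  "realizes E w leaf T \<longleftrightarrow>
     (\<forall>p q xs. spath E xs (leaf p) (leaf q) \<longrightarrow> T$p$q = path_length w xs)"

definition internal_edge :: "(5 \<Rightarrow> 'v) \<Rightarrow> 'v set \<Rightarrow> bool" where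
  "internal_edge leaf e \<longleftrightarrow> e \<inter> range leaf = {}"

definition fiber :: "real^5^5 \<Rightarrow> ((real^5^5) \<times> (real^5^5)) set" where
  "fiber T = {(D, Db). star_metric D \<and> star_metric Db \<and> tmix D Db = T}"

text \<open>A 2-dimensional polygon: a convex set of affine dimension 2 whose closure is
  a convex polytope (convex hull of finitely many points); boundary parts may be missing.\<close>
definition polygon2 :: "('a::euclidean_space) set \<Rightarrow> bool" where
  "polygon2 P \<longleftrightarrow> convex P \<and> aff_dim P = 2 \<and>
     (\<exists>S. finite S \<and> closure P = convex hull S)"

definition one_internal_cherry_cond ::
  "'v set set \<Rightarrow> ('v set \<Rightarrow> real) \<Rightarrow> (5 \<Rightarrow> 'v) \<Rightarrow> bool" where
  "one_internal_cherry_cond E w leaf \<longleftrightarrow>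
     (\<exists>u v i j. {u, v} \<in> E \<and> internal_edge leaf {u, v} \<and>
        (\<forall>f\<in>E. internal_edge leaf f \<longrightarrow> f = {u, v}) \<and>
        i \<noteq> j \<and> {u, leaf i} \<in> E \<and> {u, leaf j} \<in> E \<and>
        (\<forall>k. {u, leaf k} \<in> E \<longrightarrow> k = i \<or> k = j) \<and>
        w {u, leaf i} > w {u, v} \<and> w {u, leaf j} > w {u, v})"

end

theory Submission
  imports Defs
begin

text \<open>A non-star tree on five taxa is either the caterpillar, with two internal edges, or has a
  single internal edge of weight g separating a cherry {i, j} from the other three taxa. For the
  caterpillar, the ten equations max(a_p + a_q, b_p + b_q) = T_pq expressing T as the mixture of
  the star metrics with weights a and b are inconsistent. For the other shape, T_pq = e_p + e_q,
  plus g when p and q lie on different sides, where e are the pendant weights. Solving the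
  equations with positive a, b forces e_i, e_j > g; conversely, up to swapping a and b, every
  solution lies in exactly one of four explicit two-parameter families, each an injective affine
  image of a planar quadrilateral and hence a 2-dimensional polygon.\<close>

section \<open>Planar polygons\<close>

lemma polygon2_sandwich:
  fixes Q K :: "(real \<times> real) set"
  assumes "convex Q" "polytope K" "interior K \<noteq> {}" "interior K \<subseteq> Q" "Q \<subseteq> K"
  shows "polygon2 Q"
proof -
  have K: "closed K" "convex K"
    using assms(2) by (simp_all add: polytope_imp_closed polytope_imp_convex)
  have "closure Q = K"
  proof
    show "closure Q \<subseteq> K" using assms(5) K(1) by (rule closure_minimal)
    have "K = closure (interior K)" using convex_closure_interior[OF K(2) assms(3)] K(1) by simp
    also have "\<dots> \<subseteq> closure Q" using assms(4) by (rule closure_mono)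
    finally show "K \<subseteq> closure Q" .
  qed
  moreover have "aff_dim Q = 2"
  proof (rule antisym)
    show "aff_dim Q \<le> 2" using aff_dim_le_DIM[of Q] by simp
    have "aff_dim (interior K) = 2" using aff_dim_open[OF open_interior assms(3)] by simp
    then show "2 \<le> aff_dim Q" using aff_dim_subset[OF assms(4)] by simp
  qed
  ultimately show ?thesis
    using assms(1,2) unfolding polygon2_def polytope_def by metis
qed

lemma polygon2_quadrilateral:
  fixes p :: "real \<times> real"
  assumes p: "L < fst p" "fst p < c" "d < snd p" "snd p + s * fst p < h"
  shows "polygon2 {z. (if sl then L < fst z else L \<le> fst z) \<and> fst z < c \<and> d < snd z \<and>
    (if sh then snd z + s * fst z < h else snd z + s * fst z \<le> h)}" (is "polygon2 ?Q")
proof -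
  define K where "K = {z. (-1,0) \<bullet> z \<le> -L} \<inter> {z. (1,0) \<bullet> z \<le> c} \<inter> {z. (0,-1) \<bullet> z \<le> -d}
    \<inter> {z::real\<times>real. (s,1) \<bullet> z \<le> h}"
  have K_eq: "K = {z. L \<le> fst z \<and> fst z \<le> c \<and> d \<le> snd z \<and> snd z + s * fst z \<le> h}"
    unfolding K_def by (auto simp: inner_prod_def)
  have "interior K = {z. (-1,0) \<bullet> z < -L} \<inter> {z. (1,0) \<bullet> z < c} \<inter> {z. (0,-1) \<bullet> z < -d}
    \<inter> {z::real\<times>real. (s,1) \<bullet> z < h}"
    unfolding K_def by (simp add: zero_prod_def)
  also have "\<dots> = {z. L < fst z \<and> fst z < c \<and> d < snd z \<and> snd z + s * fst z < h}"
    by (auto simp: inner_prod_def)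
  finally have int_K: "interior K = {z. L < fst z \<and> fst z < c \<and> d < snd z \<and> snd z + s * fst z < h}" .
  have "bounded K"
  proof (rule bounded_subset)
    show "bounded ({L..c} \<times> {d..h + \<bar>s\<bar> * (\<bar>L\<bar> + \<bar>c\<bar>)})"
      by (intro bounded_Times bounded_closed_interval)
    show "K \<subseteq> {L..c} \<times> {d..h + \<bar>s\<bar> * (\<bar>L\<bar> + \<bar>c\<bar>)}"
    proof (clarsimp simp: K_eq)
      fix x y assume "L \<le> x" "x \<le> c" "y + s * x \<le> h"
      then have "\<bar>x\<bar> \<le> \<bar>L\<bar> + \<bar>c\<bar>" by linarith
      then have "- (s * x) \<le> \<bar>s\<bar> * (\<bar>L\<bar> + \<bar>c\<bar>)"
        by (metis abs_ge_minus_self abs_ge_zero abs_mult mult_left_mono order_trans)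
      with \<open>y + s * x \<le> h\<close> show "y \<le> h + \<bar>s\<bar> * (\<bar>L\<bar> + \<bar>c\<bar>)" by linarith
    qed
  qed
  moreover have "polyhedron K"
    unfolding K_def by (intro polyhedron_Int polyhedron_halfspace_le)
  ultimately have "polytope K" by (simp add: polytope_eq_bounded_polyhedron)
  moreover have "interior K \<noteq> {}" using p unfolding int_K by blast
  moreover have "interior K \<subseteq> ?Q" unfolding int_K by auto
  moreover have "?Q \<subseteq> K" unfolding K_eq by (auto split: if_splits)
  moreover have "convex ?Q"
  proof -
    have "?Q = {z. if sl then (-1,0) \<bullet> z < -L else (-1,0) \<bullet> z \<le> -L} \<inter> {z. (1,0) \<bullet> z < c}
      \<inter> {z. (0,-1) \<bullet> z < -d} \<inter> {z. if sh then (s,1) \<bullet> z < h else (s,1) \<bullet> z \<le> h}"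
      by (auto simp: inner_prod_def split: if_splits)
    then show ?thesis
      by (cases sl; cases sh) (simp_all add: convex_Int convex_halfspace_lt convex_halfspace_le)
  qed
  ultimately show ?thesis using polygon2_sandwich by blast
qed

lemma polygon2_affine_image:
  fixes f :: "'a::euclidean_space \<Rightarrow> 'b::euclidean_space"
  assumes "linear f" "inj f" "polygon2 P"
  shows "polygon2 ((\<lambda>z. c + f z) ` P)"
proof -
  obtain S where S: "finite S" "closure P = convex hull S" and P: "convex P" "aff_dim P = 2"
    using assms(3) unfolding polygon2_def by blast
  have img: "(\<lambda>z. c + f z) ` P = (+) c ` f ` P" by auto
  have "closure ((\<lambda>z. c + f z) ` P) = (+) c ` f ` (convex hull S)"
    unfolding img closure_translation closure_injective_linear_image[OF assms(1,2), symmetric] S(2) ..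
  also have "\<dots> = convex hull ((+) c ` f ` S)"
    by (simp add: convex_hull_linear_image[OF assms(1)] convex_hull_translation)
  also have "(+) c ` f ` S = (\<lambda>z. c + f z) ` S" by auto
  finally show ?thesis
    unfolding polygon2_def img using assms P S(1)
    by (auto simp: aff_dim_translation_eq convex_translation convex_linear_image)
qed

lemma polygon2_nonempty: "polygon2 P \<Longrightarrow> P \<noteq> {}"
  unfolding polygon2_def by auto

section \<open>Star matrices and tropical mixtures\<close>

definition star_matrix :: "real^'n \<Rightarrow> real^'n^'n" where
  "star_matrix a = (\<chi> p q. if p = q then 0 else a$p + a$q)"

lemma star_matrix_nth [simp]: "star_matrix a $ p $ q = (if p = q then 0 else a$p + a$q)"
  by (simp add: star_matrix_def)

lemma star_metric_iff: "star_metric D \<longleftrightarrow> (\<exists>a. (\<forall>p. 0 < a$p) \<and> D = star_matrix a)"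
  unfolding star_metric_def by (auto simp: vec_eq_iff)

lemma linear_star_matrix: "linear star_matrix"
  by (rule linearI) (simp_all add: vec_eq_iff algebra_simps)

lemma star_matrix_inj:
  assumes "CARD('n::finite) \<ge> 3"
  shows "inj (star_matrix :: real^'n \<Rightarrow> real^'n^'n)"
proof (rule injI)
  fix a b :: "real^'n" assume eq: "star_matrix a = star_matrix b"
  have "a$p = b$p" for p
  proof -
    have "card (UNIV - {p}) \<ge> 2" using assms by (simp add: card_Diff_subset)
    then have "\<not> card (UNIV - {p}) \<le> Suc 0" by simp
    then obtain q r where qr: "q \<noteq> p" "r \<noteq> p" "q \<noteq> r"
      using card_le_Suc0_iff_eq[OF finite[of "UNIV - {p}"]] by blast
    have "star_matrix a $ x $ y = star_matrix b $ x $ y" for x y using eq by simp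
    then have "a$p + a$q = b$p + b$q" "a$p + a$r = b$p + b$r" "a$q + a$r = b$q + b$r"
      using qr by (metis star_matrix_nth)+
    then show ?thesis by linarith
  qed
  then show "a = b" by (simp add: vec_eq_iff)
qed

lemma linear_map_prod: "linear f \<Longrightarrow> linear g \<Longrightarrow> linear (map_prod f g)"
  by (rule linearI) (simp_all add: map_prod_def split_def linear_add linear_scale)

lemma inj_star_pairs:
  assumes "CARD('n::finite) \<ge> 3"
  shows "inj (map_prod star_matrix star_matrix :: (real^'n) \<times> (real^'n) \<Rightarrow> _)"
  using map_prod_inj_on[OF star_matrix_inj[OF assms] star_matrix_inj[OF assms]] by simp

lemma polygon2_star_pairs_image:
  fixes f :: "real \<times> real \<Rightarrow> (real^'n) \<times> (real^'n)"
  assumes "CARD('n::finite) \<ge> 3" "linear f" "inj f" "polygon2 Q"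
  shows "polygon2 (map_prod star_matrix star_matrix ` (\<lambda>z. c + f z) ` Q)"
proof -
  let ?F = "map_prod star_matrix star_matrix :: (real^'n) \<times> (real^'n) \<Rightarrow> _"
  have F: "linear ?F" "inj ?F"
    using linear_map_prod[OF linear_star_matrix linear_star_matrix] inj_star_pairs[OF assms(1)]
    by simp_all
  have "?F ` (\<lambda>z. c + f z) ` Q = (\<lambda>z. ?F c + (?F \<circ> f) z) ` Q"
    by (auto simp: image_image linear_add[OF F(1)])
  moreover have "polygon2 ((\<lambda>z. ?F c + (?F \<circ> f) z) ` Q)"
    using F assms(2-4) by (intro polygon2_affine_image linear_compose inj_compose)
  ultimately show ?thesis by simp
qed

lemma swap_image_map_prod: "prod.swap ` map_prod f f ` X = map_prod f f ` prod.swap ` X"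
  unfolding image_image by (rule image_cong) auto

lemma fiber_eq_star_pairs_image:
  "fiber T = map_prod star_matrix star_matrix `
     {(a, b). (\<forall>p. 0 < a$p) \<and> (\<forall>p. 0 < b$p) \<and> tmix (star_matrix a) (star_matrix b) = T}"
  unfolding fiber_def star_metric_iff by fastforce

lemma tmix_commute: "tmix D Db = tmix Db D"
  by (simp add: tmix_def max.commute)

text \<open>The tree metric of a tree with a single internal edge, of weight g, that splits the taxa
  into C and its complement; e p is the weight of the pendant edge of p.\<close>
definition split_metric :: "('n \<Rightarrow> real) \<Rightarrow> real \<Rightarrow> 'n set \<Rightarrow> real^'n^'n" where
  "split_metric e g C = (\<chi> p q. if p = q then 0 else e p + e q + (if (p \<in> C) = (q \<in> C) then 0 else g))"

lemma split_metric_nth [simp]: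
  "split_metric e g C $ p $ q = (if p = q then 0 else e p + e q + (if (p \<in> C) = (q \<in> C) then 0 else g))"
  by (simp add: split_metric_def)

lemma caterpillar_max_equations_unsolvable:
  fixes a1 a2 a3 a4 a5 b1 b2 b3 b4 b5 e1 e2 e3 e4 e5 g h :: real
  assumes "0 < g" "0 < h"
    "max (a1 + a2) (b1 + b2) = e1 + e2"
    "max (a1 + a3) (b1 + b3) = e1 + g + e3"
    "max (a1 + a4) (b1 + b4) = e1 + g + h + e4"
    "max (a1 + a5) (b1 + b5) = e1 + g + h + e5"
    "max (a2 + a3) (b2 + b3) = e2 + g + e3"
    "max (a2 + a4) (b2 + b4) = e2 + g + h + e4"
    "max (a2 + a5) (b2 + b5) = e2 + g + h + e5"
    "max (a3 + a4) (b3 + b4) = e3 + h + e4"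
    "max (a3 + a5) (b3 + b5) = e3 + h + e5"
    "max (a4 + a5) (b4 + b5) = e4 + e5"
  shows False
  using assms unfolding max_def by (smt (z3))

section \<open>The fiber over a tree with one internal edge\<close>

locale five_taxa =
  fixes i j k l m :: 5
  assumes distinct: "i \<noteq> j" "i \<noteq> k" "i \<noteq> l" "i \<noteq> m" "j \<noteq> k" "j \<noteq> l" "j \<noteq> m"
     "k \<noteq> l" "k \<noteq> m" "l \<noteq> m"
    and all_taxa: "UNIV = {i, j, k, l, m}"
begin

lemma forall_taxa: "(\<forall>p. P p) \<longleftrightarrow> P i \<and> P j \<and> P k \<and> P l \<and> P m"
  using all_taxa by (metis UNIV_I insertE singletonD)

lemma forall_others: "(\<forall>p. p \<notin> {i, j} \<longrightarrow> P p) \<longleftrightarrow> P k \<and> P l \<and> P m"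
  using distinct by (auto simp: forall_taxa)

lemma vec_eq_taxa: "(a::real^5) = b \<longleftrightarrow> a$i = b$i \<and> a$j = b$j \<and> a$k = b$k \<and> a$l = b$l \<and> a$m = b$m"
  by (simp add: vec_eq_iff forall_taxa)

lemma tmix_star_eq_split_metric:
  "tmix (star_matrix a) (star_matrix b) = split_metric e g {i, j} \<longleftrightarrow>
     max (a$i + a$j) (b$i + b$j) = e i + e j \<and>
     max (a$i + a$k) (b$i + b$k) = e i + g + e k \<and>
     max (a$i + a$l) (b$i + b$l) = e i + g + e l \<and>
     max (a$i + a$m) (b$i + b$m) = e i + g + e m \<and>
     max (a$j + a$k) (b$j + b$k) = e j + g + e k \<and>
     max (a$j + a$l) (b$j + b$l) = e j + g + e l \<and>
     max (a$j + a$m) (b$j + b$m) = e j + g + e m \<and>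
     max (a$k + a$l) (b$k + b$l) = e k + e l \<and>
     max (a$k + a$m) (b$k + b$m) = e k + e m \<and>
     max (a$l + a$m) (b$l + b$m) = e l + e m"
  unfolding tmix_def vec_eq_iff forall_taxa using distinct
  by (auto simp: ac_simps max.commute)

end

lemma five_taxa_swap: "five_taxa i j k l m \<Longrightarrow> five_taxa j i k l m"
  unfolding five_taxa_def by (auto simp: insert_commute)

text \<open>Up to swapping, the fiber consists of pairs of star weights parametrised by s = a_i - e_i \<ge> g
  and one more coordinate: in a rigid cell b is fixed and a_j is free, in a sliding cell a is
  determined by s and b_i is free. The flag strict opens the edge s = g; it is set for the cells
  of the reversed cherry (j, i), whose swapped copies would otherwise meet the (i, j)-cells there.\<close>
definition rigid_cell :: "bool \<Rightarrow> 'n \<Rightarrow> 'n \<Rightarrow> ('n \<Rightarrow> real) \<Rightarrow> real \<Rightarrow> ((real^'n) \<times> (real^'n)) set" where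
  "rigid_cell strict i j e g = {(a, b).
     b = (\<chi> p. if p = i then e p - g else if p = j then e p + g else e p) \<and>
     (if strict then g < a$i - e i else g \<le> a$i - e i) \<and>
     (\<forall>p. p \<notin> {i, j} \<longrightarrow> a$i - e i < g + e p \<and> a$p = e p + g - (a$i - e i)) \<and>
     0 < a$j \<and> a$i + a$j \<le> e i + e j}"

definition sliding_cell :: "bool \<Rightarrow> 'n \<Rightarrow> 'n \<Rightarrow> ('n \<Rightarrow> real) \<Rightarrow> real \<Rightarrow> ((real^'n) \<times> (real^'n)) set" where
  "sliding_cell strict i j e g = {(a, b).
     0 < b$i \<and> b$i < e i - g \<and> b$j = e j + g \<and> (\<forall>p. p \<notin> {i, j} \<longrightarrow> b$p = e p) \<and>
     (if strict then g < a$i - e i else g \<le> a$i - e i) \<and>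
     (\<forall>p. p \<notin> {i, j} \<longrightarrow> a$i - e i < g + e p \<and> a$p = e p + g - (a$i - e i)) \<and>
     a$i - e i < e j \<and> a$i + a$j = e i + e j}"

context five_taxa
begin

lemma rigid_cell_iff:
  "(a, b) \<in> rigid_cell strict i j e g \<longleftrightarrow>
     b$i = e i - g \<and> b$j = e j + g \<and> b$k = e k \<and> b$l = e l \<and> b$m = e m \<and>
     (if strict then g < a$i - e i else g \<le> a$i - e i) \<and>
     a$i - e i < g + e k \<and> a$k = e k + g - (a$i - e i) \<and>
     a$i - e i < g + e l \<and> a$l = e l + g - (a$i - e i) \<and>
     a$i - e i < g + e m \<and> a$m = e m + g - (a$i - e i) \<and>
     0 < a$j \<and> a$i + a$j \<le> e i + e j"
  unfolding rigid_cell_def vec_eq_taxa forall_others using distinct by auto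

lemma sliding_cell_iff:
  "(a, b) \<in> sliding_cell strict i j e g \<longleftrightarrow>
     0 < b$i \<and> b$i < e i - g \<and> b$j = e j + g \<and> b$k = e k \<and> b$l = e l \<and> b$m = e m \<and>
     (if strict then g < a$i - e i else g \<le> a$i - e i) \<and>
     a$i - e i < g + e k \<and> a$k = e k + g - (a$i - e i) \<and>
     a$i - e i < g + e l \<and> a$l = e l + g - (a$i - e i) \<and>
     a$i - e i < g + e m \<and> a$m = e m + g - (a$i - e i) \<and>
     a$i - e i < e j \<and> a$i + a$j = e i + e j"
  unfolding sliding_cell_def forall_others using distinct by auto

lemma mixture_pendants_exceed:
  assumes "0 < g" "\<forall>p. 0 < a$p" "\<forall>p. 0 < b$p"
    and "tmix (star_matrix a) (star_matrix b) = split_metric e g {i, j}"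
  shows "g < e i \<and> g < e j"
  using assms unfolding tmix_star_eq_split_metric forall_taxa max_def by (smt (z3))

lemma rigid_cell_mixture:
  assumes "0 < g" "\<forall>p. 0 < e p" "g < e i" "(a, b) \<in> rigid_cell strict i j e g"
  shows "(\<forall>p. 0 < a$p) \<and> (\<forall>p. 0 < b$p) \<and>
    tmix (star_matrix a) (star_matrix b) = split_metric e g {i, j}"
  using assms unfolding rigid_cell_iff forall_taxa tmix_star_eq_split_metric
  by (auto simp: max_def split: if_splits)

lemma sliding_cell_mixture:
  assumes "0 < g" "\<forall>p. 0 < e p" "(a, b) \<in> sliding_cell strict i j e g"
  shows "(\<forall>p. 0 < a$p) \<and> (\<forall>p. 0 < b$p) \<and>
    tmix (star_matrix a) (star_matrix b) = split_metric e g {i, j}"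
  using assms unfolding sliding_cell_iff forall_taxa tmix_star_eq_split_metric
  by (auto simp: max_def split: if_splits)

definition fiber_cell :: "(5 \<Rightarrow> real) \<Rightarrow> real \<Rightarrow> nat \<Rightarrow> ((real^5) \<times> (real^5)) set" where
  "fiber_cell e g n = [rigid_cell False i j e g, rigid_cell True j i e g,
     sliding_cell False i j e g, sliding_cell True j i e g] ! n"

lemma mixture_cell_cases:
  assumes "0 < g" "\<forall>p. 0 < a$p" "\<forall>p. 0 < b$p"
    and "tmix (star_matrix a) (star_matrix b) = split_metric e g {i, j}"
  shows "\<exists>n<4. (a, b) \<in> fiber_cell e g n \<or> (b, a) \<in> fiber_cell e g n"
proof -
  interpret swap: five_taxa j i k l m by (rule five_taxa_swap) (rule five_taxa_axioms)
  have "(a, b) \<in> rigid_cell False i j e g \<or> (b, a) \<in> rigid_cell False i j e g \<or>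
    (a, b) \<in> rigid_cell True j i e g \<or> (b, a) \<in> rigid_cell True j i e g \<or>
    (a, b) \<in> sliding_cell False i j e g \<or> (b, a) \<in> sliding_cell False i j e g \<or>
    (a, b) \<in> sliding_cell True j i e g \<or> (b, a) \<in> sliding_cell True j i e g"
    using assms
    unfolding rigid_cell_iff swap.rigid_cell_iff sliding_cell_iff swap.sliding_cell_iff
      tmix_star_eq_split_metric forall_taxa max_def
    by (smt (z3))
  then have "\<exists>n\<in>{0, 1, 2, 3}. (a, b) \<in> fiber_cell e g n \<or> (b, a) \<in> fiber_cell e g n"
    by (simp add: fiber_cell_def)
  then obtain n where "n \<in> {0, 1, 2, 3}" "(a, b) \<in> fiber_cell e g n \<or> (b, a) \<in> fiber_cell e g n"
    by blast
  moreover from this(1) have "n < 4" by auto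
  ultimately show ?thesis by blast
qed

lemma fiber_cell_mixture:
  assumes "0 < g" "\<forall>p. 0 < e p" "g < e i" "g < e j" "n < 4" "(a, b) \<in> fiber_cell e g n"
  shows "(\<forall>p. 0 < a$p) \<and> (\<forall>p. 0 < b$p) \<and>
    tmix (star_matrix a) (star_matrix b) = split_metric e g {i, j}"
proof -
  interpret swap: five_taxa j i k l m by (rule five_taxa_swap) (rule five_taxa_axioms)
  consider "n = 0" | "n = 1" | "n = 2" | "n = 3" using \<open>n < 4\<close> by linarith
  then show ?thesis
  proof cases
    case 1 then show ?thesis
      using assms(6) rigid_cell_mixture[OF assms(1-3)] by (simp add: fiber_cell_def)
  next
    case 2 then show ?thesis
      using assms(6) swap.rigid_cell_mixture[OF assms(1,2,4)] by (simp add: fiber_cell_def insert_commute)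
  next
    case 3 then show ?thesis
      using assms(6) sliding_cell_mixture[OF assms(1,2)] by (simp add: fiber_cell_def numeral_2_eq_2)
  next
    case 4 then show ?thesis
      using assms(6) swap.sliding_cell_mixture[OF assms(1,2)]
      by (simp add: fiber_cell_def numeral_3_eq_3 insert_commute)
  qed
qed

lemma positive_mixtures_split_metric:
  assumes "0 < g" "\<forall>p. 0 < e p" "g < e i" "g < e j"
  shows "{(a, b). (\<forall>p. 0 < a$p) \<and> (\<forall>p. 0 < b$p) \<and>
      tmix (star_matrix a) (star_matrix b) = split_metric e g {i, j}}
    = (\<Union>n<4. fiber_cell e g n \<union> prod.swap ` fiber_cell e g n)"
proof (intro set_eqI iffI)
  fix x assume "x \<in> {(a, b). (\<forall>p. 0 < a$p) \<and> (\<forall>p. 0 < b$p) \<and>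
      tmix (star_matrix a) (star_matrix b) = split_metric e g {i, j}}"
  then obtain a b where x: "x = (a, b)" and "\<forall>p. 0 < a$p" "\<forall>p. 0 < b$p"
    "tmix (star_matrix a) (star_matrix b) = split_metric e g {i, j}" by blast
  then obtain n where "n < 4" "(a, b) \<in> fiber_cell e g n \<or> (b, a) \<in> fiber_cell e g n"
    using mixture_cell_cases[OF assms(1)] by blast
  moreover have "(a, b) \<in> prod.swap ` fiber_cell e g n" if "(b, a) \<in> fiber_cell e g n"
    using that by (rule rev_image_eqI) simp
  ultimately show "x \<in> (\<Union>n<4. fiber_cell e g n \<union> prod.swap ` fiber_cell e g n)"
    unfolding x by blast
next
  fix x assume "x \<in> (\<Union>n<4. fiber_cell e g n \<union> prod.swap ` fiber_cell e g n)"
  then show "x \<in> {(a, b). (\<forall>p. 0 < a$p) \<and> (\<forall>p. 0 < b$p) \<and>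
      tmix (star_matrix a) (star_matrix b) = split_metric e g {i, j}}"
    using fiber_cell_mixture[OF assms] by (auto simp: tmix_commute)
qed

lemma fiber_cells_disjoint:
  assumes "0 < g" "n < 4" "n' < 4" "(a, b) \<in> fiber_cell e g n"
    and "(a, b) \<in> fiber_cell e g n' \<or> (b, a) \<in> fiber_cell e g n'"
  shows "n = n'"
proof -
  interpret swap: five_taxa j i k l m by (rule five_taxa_swap) (rule five_taxa_axioms)
  have "n = 0 \<or> n = 1 \<or> n = 2 \<or> n = 3" "n' = 0 \<or> n' = 1 \<or> n' = 2 \<or> n' = 3"
    using assms(2,3) by auto
  then show ?thesis
    using assms(1,4,5) unfolding fiber_cell_def
    by (auto simp: rigid_cell_iff swap.rigid_cell_iff sliding_cell_iff swap.sliding_cell_iff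
      split: if_splits)
qed

lemma fiber_cell_orbits_disjoint:
  assumes "0 < g" "n < 4" "n' < 4" "n \<noteq> n'"
  shows "(fiber_cell e g n \<union> prod.swap ` fiber_cell e g n) \<inter>
    (fiber_cell e g n' \<union> prod.swap ` fiber_cell e g n') = {}"
proof (rule equals0I)
  fix x assume x: "x \<in> (fiber_cell e g n \<union> prod.swap ` fiber_cell e g n) \<inter>
    (fiber_cell e g n' \<union> prod.swap ` fiber_cell e g n')"
  obtain a b where "x = (a, b)" by (cases x)
  with x have "(a, b) \<in> fiber_cell e g n \<or> (b, a) \<in> fiber_cell e g n"
    "(a, b) \<in> fiber_cell e g n' \<or> (b, a) \<in> fiber_cell e g n'" by auto
  then show False
    using fiber_cells_disjoint[OF assms(1-3), of a b] fiber_cells_disjoint[OF assms(1-3), of b a] assms(4)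
    by blast
qed

lemma rigid_cell_eq_image:
  "rigid_cell strict i j e g =
    (\<lambda>(s, t). ((\<chi> p. if p = i then e p + s else if p = j then t else e p + g - s),
                (\<chi> p. if p = i then e p - g else if p = j then e p + g else e p))) `
    {(s, t). (if strict then g < s else g \<le> s) \<and> s < g + min (e k) (min (e l) (e m)) \<and>
      0 < t \<and> t + s \<le> e j}" (is "_ = ?f ` ?Q")
proof -
  have mem: "(a, b) \<in> rigid_cell strict i j e g \<longleftrightarrow> (a, b) \<in> ?f ` ?Q" for a b
  proof
    assume ab: "(a, b) \<in> rigid_cell strict i j e g"
    show "(a, b) \<in> ?f ` ?Q"
    proof (rule image_eqI)
      show "(a, b) = ?f (a$i - e i, a$j)" using ab distinct unfolding rigid_cell_iff by (simp add: vec_eq_taxa)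
      show "(a$i - e i, a$j) \<in> ?Q" using ab unfolding rigid_cell_iff by auto
    qed
  next
    assume "(a, b) \<in> ?f ` ?Q"
    then show "(a, b) \<in> rigid_cell strict i j e g" using distinct unfolding rigid_cell_iff by auto
  qed
  show ?thesis by (rule set_eqI) (use mem[of "fst x" "snd x" for x] in simp)
qed

lemma sliding_cell_eq_image:
  "sliding_cell strict i j e g =
    (\<lambda>(s, t). ((\<chi> p. if p = i then e p + s else if p = j then e p - s else e p + g - s),
                (\<chi> p. if p = i then t else if p = j then e p + g else e p))) `
    {(s, t). (if strict then g < s else g \<le> s) \<and> s < min (e j) (g + min (e k) (min (e l) (e m))) \<and>
      0 < t \<and> t < e i - g}" (is "_ = ?f ` ?Q")
proof -
  have mem: "(a, b) \<in> sliding_cell strict i j e g \<longleftrightarrow> (a, b) \<in> ?f ` ?Q" for a b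
  proof
    assume ab: "(a, b) \<in> sliding_cell strict i j e g"
    show "(a, b) \<in> ?f ` ?Q"
    proof (rule image_eqI)
      show "(a, b) = ?f (a$i - e i, b$i)" using ab distinct unfolding sliding_cell_iff by (simp add: vec_eq_taxa)
      show "(a$i - e i, b$i) \<in> ?Q" using ab unfolding sliding_cell_iff by auto
    qed
  next
    assume "(a, b) \<in> ?f ` ?Q"
    then show "(a, b) \<in> sliding_cell strict i j e g" using distinct unfolding sliding_cell_iff by auto
  qed
  show ?thesis by (rule set_eqI) (use mem[of "fst x" "snd x" for x] in simp)
qed

lemma polygon2_rigid_cell:
  assumes "0 < g" "\<forall>p. 0 < e p" "g < e j"
  shows "polygon2 (map_prod star_matrix star_matrix ` rigid_cell strict i j e g)"
proof -
  define c where "c = g + min (e k) (min (e l) (e m))"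
  define f :: "real \<times> real \<Rightarrow> (real^5) \<times> (real^5)" where
    "f z = ((\<chi> p. if p = i then fst z else if p = j then snd z else - fst z), 0)" for z
  have "linear f" by (rule linearI) (auto simp: f_def vec_eq_iff)
  moreover have "inj f"
  proof (rule injI)
    fix z z' assume "f z = f z'"
    then have "fst (f z) $ i = fst (f z') $ i" "fst (f z) $ j = fst (f z') $ j" by simp_all
    then show "z = z'" using distinct by (simp add: f_def prod_eq_iff)
  qed
  moreover have "polygon2 {(s, t). (if strict then g < s else g \<le> s) \<and> s < c \<and> 0 < t \<and> t + s \<le> e j}"
  proof -
    define s0 where "s0 = (g + min c (e j)) / 2"
    have "g < c" using assms(2) by (simp add: c_def)
    then have "g < s0" "s0 < c" "s0 < e j" using assms(3) by (auto simp: s0_def min_def)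
    then have "polygon2 {z. (if strict then g < fst z else g \<le> fst z) \<and> fst z < c \<and> 0 < snd z \<and>
      (if False then snd z + 1 * fst z < e j else snd z + 1 * fst z \<le> e j)}"
      by (intro polygon2_quadrilateral[where p = "(s0, (e j - s0) / 2)"]) (auto simp: field_simps)
    then show ?thesis by (simp add: split_def)
  qed
  moreover have "rigid_cell strict i j e g =
    (\<lambda>z. ((\<chi> p. if p = i then e p else if p = j then 0 else e p + g),
          (\<chi> p. if p = i then e p - g else if p = j then e p + g else e p)) + f z) `
    {(s, t). (if strict then g < s else g \<le> s) \<and> s < c \<and> 0 < t \<and> t + s \<le> e j}"
    unfolding rigid_cell_eq_image c_def by (intro image_cong) (auto simp: f_def vec_eq_iff)
  ultimately show ?thesis by (simp add: polygon2_star_pairs_image)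
qed

lemma polygon2_sliding_cell:
  assumes "0 < g" "\<forall>p. 0 < e p" "g < e i" "g < e j"
  shows "polygon2 (map_prod star_matrix star_matrix ` sliding_cell strict i j e g)"
proof -
  define c where "c = min (e j) (g + min (e k) (min (e l) (e m)))"
  define f :: "real \<times> real \<Rightarrow> (real^5) \<times> (real^5)" where
    "f z = ((\<chi> p. if p = i then fst z else - fst z), (\<chi> p. if p = i then snd z else 0))" for z
  have "linear f" by (rule linearI) (auto simp: f_def vec_eq_iff)
  moreover have "inj f"
  proof (rule injI)
    fix z z' assume "f z = f z'"
    then have "fst (f z) $ i = fst (f z') $ i" "snd (f z) $ i = snd (f z') $ i" by simp_all
    then show "z = z'" by (simp add: f_def prod_eq_iff)
  qed
  moreover have "polygon2 {(s, t). (if strict then g < s else g \<le> s) \<and> s < c \<and> 0 < t \<and> t < e i - g}"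
  proof -
    have "g < c" using assms(2,4) by (simp add: c_def)
    then have "polygon2 {z. (if strict then g < fst z else g \<le> fst z) \<and> fst z < c \<and> 0 < snd z \<and>
      (if True then snd z + 0 * fst z < e i - g else snd z + 0 * fst z \<le> e i - g)}"
      using assms(3) by (intro polygon2_quadrilateral[where p = "((g + c) / 2, (e i - g) / 2)"]) auto
    then show ?thesis by (simp add: split_def)
  qed
  moreover have "sliding_cell strict i j e g =
    (\<lambda>z. ((\<chi> p. if p \<in> {i, j} then e p else e p + g),
          (\<chi> p. if p = i then 0 else if p = j then e p + g else e p)) + f z) `
    {(s, t). (if strict then g < s else g \<le> s) \<and> s < c \<and> 0 < t \<and> t < e i - g}"
    unfolding sliding_cell_eq_image c_def by (intro image_cong) (auto simp: f_def vec_eq_iff)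
  ultimately show ?thesis by (simp add: polygon2_star_pairs_image)
qed

theorem split_metric_fiber_decomposition:
  assumes "0 < g" "\<forall>p. 0 < e p" "g < e i" "g < e j"
  shows "\<exists>P :: nat \<Rightarrow> ((real^5^5) \<times> (real^5^5)) set.
    (\<forall>n<4. polygon2 (P n)) \<and>
    fiber (split_metric e g {i, j}) = (\<Union>n<4. P n \<union> prod.swap ` P n) \<and>
    (\<forall>n<4. \<forall>n'<4. n \<noteq> n' \<longrightarrow> (P n \<union> prod.swap ` P n) \<inter> (P n' \<union> prod.swap ` P n') = {})"
proof -
  interpret swap: five_taxa j i k l m by (rule five_taxa_swap) (rule five_taxa_axioms)
  let ?F = "map_prod star_matrix star_matrix :: (real^5) \<times> (real^5) \<Rightarrow> _"
  define P where "P n = ?F ` fiber_cell e g n" for n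
  have inj_F: "inj ?F" by (simp add: inj_star_pairs)
  have orbit: "P n \<union> prod.swap ` P n = ?F ` (fiber_cell e g n \<union> prod.swap ` fiber_cell e g n)" for n
    unfolding P_def image_Un swap_image_map_prod ..
  have "polygon2 (P n)" if "n < 4" for n
  proof -
    consider "n = 0" | "n = 1" | "n = 2" | "n = 3" using \<open>n < 4\<close> by linarith
    then show ?thesis
    proof cases
      case 1 then show ?thesis
        using polygon2_rigid_cell[OF assms(1,2,4)] by (simp add: P_def fiber_cell_def)
    next
      case 2 then show ?thesis
        using swap.polygon2_rigid_cell[OF assms(1-3)] by (simp add: P_def fiber_cell_def)
    next
      case 3 then show ?thesis
        using polygon2_sliding_cell[OF assms] by (simp add: P_def fiber_cell_def numeral_2_eq_2)
    next
      case 4 then show ?thesis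
        using swap.polygon2_sliding_cell[OF assms(1,2,4,3)]
        by (simp add: P_def fiber_cell_def numeral_3_eq_3)
    qed
  qed
  moreover have "fiber (split_metric e g {i, j}) = (\<Union>n<4. P n \<union> prod.swap ` P n)"
    unfolding fiber_eq_star_pairs_image positive_mixtures_split_metric[OF assms] orbit image_UN ..
  moreover have "(P n \<union> prod.swap ` P n) \<inter> (P n' \<union> prod.swap ` P n') = {}"
    if "n < 4" "n' < 4" "n \<noteq> n'" for n n'
    unfolding orbit image_Int[OF inj_F, symmetric]
    using fiber_cell_orbits_disjoint[OF assms(1) that] by simp
  ultimately show ?thesis by blast
qed

end

section \<open>Trees on five taxa\<close>

lemma spath_singleton [simp]: "spath E [x] a b \<longleftrightarrow> a = x \<and> b = x"
  unfolding spath_def by auto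

lemma spath_Cons_Cons:
  "spath E (x # y # r) a b \<longleftrightarrow> a = x \<and> {x, y} \<in> E \<and> x \<notin> set (y # r) \<and> spath E (y # r) y b"
proof -
  have all_nat: "(\<forall>i::nat. P i) \<longleftrightarrow> P 0 \<and> (\<forall>i. P (Suc i))" for P
    by (metis old.nat.exhaust)
  show ?thesis unfolding spath_def by (subst all_nat) auto
qed

lemma spath_Cons: "spath E xs a b \<Longrightarrow> \<exists>r. xs = a # r"
  unfolding spath_def by (cases xs) auto

lemma spath_prefix:
  assumes "spath E xs a b" "n < length xs"
  shows "spath E (take (Suc n) xs) a (xs ! n)"
  using assms unfolding spath_def
  by (auto simp: hd_take last_conv_nth nth_take)

lemma card_plus_excess_le_sum:
  fixes f :: "'a \<Rightarrow> nat"
  assumes "finite C" "\<And>y. y \<in> C \<Longrightarrow> 1 \<le> f y" "y \<in> C"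
  shows "card C + (f y - 1) \<le> sum f C"
proof -
  have "card (C - {y}) \<le> sum f (C - {y})"
    using sum_mono[of "C - {y}" "\<lambda>_. 1" f] assms(2) by simp
  moreover have "sum f C = f y + sum f (C - {y})" using assms(1,3) by (rule sum.remove)
  moreover have "card C = Suc (card (C - {y}))" using assms(1,3) by (rule card.remove)
  ultimately show ?thesis using assms(2)[OF assms(3)] by linarith
qed

lemma path_length_Cons_Cons: "path_length w (x # y # r) = w {x, y} + path_length w (y # r)"
  unfolding path_length_def by (simp add: sum.lessThan_Suc_shift del: sum.lessThan_Suc)

lemma path_length_singleton [simp]: "path_length w [x] = 0"
  unfolding path_length_def by simp

locale phylo_tree =
  fixes V :: "'v set" and E :: "'v set set" and w :: "'v set \<Rightarrow> real" and leaf :: "5 \<Rightarrow> 'v"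
  assumes weighted_phylo_tree: "weighted_phylo_tree V E w leaf"
begin

lemma finite_V: "finite V"
  and edges_subset: "E \<subseteq> {{a, b} | a b. a \<in> V \<and> b \<in> V \<and> a \<noteq> b}"
  and spath_unique: "\<And>a b. a \<in> V \<Longrightarrow> b \<in> V \<Longrightarrow> \<exists>!xs. spath E xs a b"
  and inj_leaf: "inj leaf"
  and vdegree_leaf: "vdegree E (leaf p) = 1"
  and vdegree_internal: "\<And>v. v \<in> V \<Longrightarrow> v \<notin> range leaf \<Longrightarrow> vdegree E v \<ge> 3"
  and weight_pos: "\<And>e. e \<in> E \<Longrightarrow> w e > 0"
  using weighted_phylo_tree unfolding weighted_phylo_tree_def is_tree_def by auto

lemma leaf_in_V: "leaf p \<in> V"
  using weighted_phylo_tree unfolding weighted_phylo_tree_def by blast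

lemma edge_endpoints: "{x, y} \<in> E \<Longrightarrow> x \<noteq> y \<and> x \<in> V \<and> y \<in> V"
  using edges_subset by (fastforce simp: doubleton_eq_iff)

lemma spath_in_V:
  assumes "spath E xs a b" "t \<in> set xs" "2 \<le> length xs"
  shows "t \<in> V"
proof -
  obtain n where n: "n < length xs" "xs ! n = t" using assms(2) by (metis in_set_conv_nth)
  have edge: "{xs ! i, xs ! Suc i} \<in> E" if "Suc i < length xs" for i
    using assms(1) that unfolding spath_def by blast
  show ?thesis
  proof (cases "Suc n < length xs")
    case True then show ?thesis using edge edge_endpoints n(2) by blast
  next
    case False
    then have "n = Suc (n - 1)" "Suc (n - 1) < length xs" using assms(3) n(1) by auto
    then show ?thesis using edge[of "n - 1"] edge_endpoints n(2) by metis
  qed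
qed

definition nbrs :: "'v \<Rightarrow> 'v set" where
  "nbrs x = {y. {x, y} \<in> E}"

lemma mem_nbrs_iff: "y \<in> nbrs x \<longleftrightarrow> {x, y} \<in> E"
  by (simp add: nbrs_def)

lemma finite_nbrs: "finite (nbrs x)"
  using finite_V edge_endpoints by (auto simp: nbrs_def intro: finite_subset)

lemma vdegree_eq_card_nbrs: "vdegree E x = card (nbrs x)"
proof -
  have "{e \<in> E. x \<in> e} = (\<lambda>y. {x, y}) ` nbrs x"
  proof (intro set_eqI iffI)
    fix e assume "e \<in> {e \<in> E. x \<in> e}"
    then obtain a b where "e = {a, b}" "e \<in> E" "x \<in> e" using edges_subset by blast
    then show "e \<in> (\<lambda>y. {x, y}) ` nbrs x" by (auto simp: nbrs_def insert_commute)
  qed (auto simp: nbrs_def)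
  moreover have "inj_on (\<lambda>y. {x, y}) (nbrs x)"
    by (rule inj_onI) (auto simp: doubleton_eq_iff mem_nbrs_iff dest: edge_endpoints)
  ultimately show ?thesis unfolding vdegree_def by (simp add: card_image)
qed

lemma leaf_nbr_unique: "{leaf p, y} \<in> E \<Longrightarrow> {leaf p, z} \<in> E \<Longrightarrow> y = z"
  using vdegree_leaf[of p] unfolding vdegree_eq_card_nbrs
  by (metis card_1_singletonE mem_nbrs_iff singletonD)

lemma card_nbrs_internal: "v \<in> V \<Longrightarrow> v \<notin> range leaf \<Longrightarrow> 3 \<le> card (nbrs v)"
  using vdegree_internal vdegree_eq_card_nbrs by metis

definition branch :: "'v \<Rightarrow> 'v \<Rightarrow> 'v set" where
  "branch x y = {t. \<exists>r. spath E (x # y # r) x t}"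

lemma branch_in_V: "t \<in> branch x y \<Longrightarrow> t \<in> V"
proof -
  assume "t \<in> branch x y"
  then obtain r where path: "spath E (x # y # r) x t" unfolding branch_def by blast
  then have "t \<in> set (x # y # r)" unfolding spath_def by (metis last_in_set list.distinct(1))
  then show "t \<in> V" using spath_in_V[OF path] by simp
qed

lemma mem_branch_self: "{x, y} \<in> E \<Longrightarrow> y \<in> branch x y"
  using edge_endpoints[of x y] unfolding branch_def by (auto intro!: exI[of _ "[]"] simp: spath_Cons_Cons)

lemma branch_cover:
  assumes "x \<in> V" "t \<in> V" "t \<noteq> x"
  shows "\<exists>y. {x, y} \<in> E \<and> t \<in> branch x y"
proof -
  obtain xs where "spath E xs x t" using spath_unique[OF assms(1,2)] by blast
  moreover obtain r where "xs = x # r" using spath_Cons[OF calculation] by blast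
  ultimately show ?thesis
    using assms(3) by (cases r) (auto simp: branch_def spath_Cons_Cons)
qed

lemma branch_unique:
  assumes "x \<in> V" "t \<in> branch x y" "t \<in> branch x y'"
  shows "y = y'"
proof -
  obtain r r' where "spath E (x # y # r) x t" "spath E (x # y' # r') x t"
    using assms(2,3) unfolding branch_def by blast
  then have "x # y # r = x # y' # r'" using spath_unique[OF assms(1) branch_in_V[OF assms(2)]] by blast
  then show ?thesis by simp
qed

lemma branch_leaf: "{x, leaf q} \<in> E \<Longrightarrow> branch x (leaf q) = {leaf q}"
proof (intro equalityI subsetI)
  fix t assume e: "{x, leaf q} \<in> E" and "t \<in> branch x (leaf q)"
  then obtain r where path: "spath E (x # leaf q # r) x t" unfolding branch_def by blast
  show "t \<in> {leaf q}"
  proof (cases r)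
    case (Cons z r')
    then have "{leaf q, z} \<in> E" "z \<noteq> x" using path by (auto simp: spath_Cons_Cons)
    moreover have "{leaf q, x} \<in> E" using e by (simp add: insert_commute)
    ultimately show ?thesis using leaf_nbr_unique by blast
  qed (use path in \<open>simp add: spath_Cons_Cons\<close>)
qed (simp add: mem_branch_self)

lemma not_mem_branch_source: "y \<notin> branch y z"
  unfolding branch_def spath_def by (auto simp: last_in_set)

lemma spath_avoids_nbr:
  assumes path: "spath E (y # z # r) y t" and e: "{x, y} \<in> E" and "z \<noteq> x"
  shows "x \<notin> set (y # z # r)"
proof
  assume "x \<in> set (y # z # r)"
  then obtain n where n: "n < length (y # z # r)" "(y # z # r) ! n = x" by (metis in_set_conv_nth)
  have xy: "x \<noteq> y" "x \<in> V" "y \<in> V" using edge_endpoints[OF e] by auto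
  have "spath E (take (Suc n) (y # z # r)) y x" using spath_prefix[OF path n(1)] n(2) by simp
  moreover have "spath E [y, x] y x" using e xy by (auto simp: spath_Cons_Cons insert_commute)
  ultimately have "take (Suc n) (y # z # r) = [y, x]" using spath_unique xy by blast
  then have "length (take (Suc n) (y # z # r)) = 2" by simp
  then have "n = 1" using n(1) by (simp add: min_def split: if_splits)
  then show False using n(2) \<open>z \<noteq> x\<close> by simp
qed

lemma branch_step: "{x, y} \<in> E \<Longrightarrow> branch x y = insert y (\<Union>z\<in>nbrs y - {x}. branch y z)"
proof (intro equalityI subsetI)
  fix t assume "{x, y} \<in> E" "t \<in> branch x y"
  then obtain r where path: "spath E (x # y # r) x t" unfolding branch_def by blast
  show "t \<in> insert y (\<Union>z\<in>nbrs y - {x}. branch y z)"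
  proof (cases r)
    case Nil then show ?thesis using path by (simp add: spath_Cons_Cons)
  next
    case (Cons z r')
    then have "spath E (y # z # r') y t" "z \<noteq> x" "{y, z} \<in> E"
      using path by (auto simp: spath_Cons_Cons)
    then show ?thesis by (auto simp: branch_def mem_nbrs_iff)
  qed
next
  fix t assume e: "{x, y} \<in> E" and t: "t \<in> insert y (\<Union>z\<in>nbrs y - {x}. branch y z)"
  show "t \<in> branch x y"
  proof (cases "t = y")
    case True then show ?thesis using mem_branch_self[OF e] by simp
  next
    case False
    then obtain z r where "z \<noteq> x" and path: "spath E (y # z # r) y t"
      using t unfolding branch_def by blast
    then have "spath E (x # y # z # r) x t"
      using spath_avoids_nbr[OF path e] e by (subst spath_Cons_Cons) auto
    then show ?thesis unfolding branch_def by blast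
  qed
qed

lemma branch_has_leaf: "{x, y} \<in> E \<Longrightarrow> \<exists>p. leaf p \<in> branch x y"
proof (induction "card (branch x y)" arbitrary: x y rule: less_induct)
  case less
  show ?case
  proof (cases "y \<in> range leaf")
    case True then show ?thesis using mem_branch_self[OF less.prems] by auto
  next
    case False
    have "y \<in> V" using edge_endpoints[OF less.prems] by simp
    have "\<not> nbrs y \<subseteq> {x}"
    proof
      assume "nbrs y \<subseteq> {x}"
      then have "card (nbrs y) \<le> card {x}" by (rule card_mono[rotated]) simp
      then show False using card_nbrs_internal[OF \<open>y \<in> V\<close> False] by simp
    qed
    then obtain z where "z \<in> nbrs y" "z \<notin> {x}" by blast
    then have z: "{y, z} \<in> E" "z \<noteq> x" by (simp_all add: mem_nbrs_iff)
    have "branch y z \<subseteq> branch x y"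
      using branch_step[OF less.prems] z by (auto simp: mem_nbrs_iff)
    then have "branch y z \<subset> branch x y"
      using mem_branch_self[OF less.prems] not_mem_branch_source by blast
    moreover have "finite (branch x y)" using branch_in_V finite_V by (meson finite_subset subsetI)
    ultimately show ?thesis using less.hyps[OF psubset_card_mono z(1)] by blast
  qed
qed

definition clade :: "'v \<Rightarrow> 'v \<Rightarrow> 5 set" where
  "clade x y = {p. leaf p \<in> branch x y}"

lemma clade_nonempty: "{x, y} \<in> E \<Longrightarrow> clade x y \<noteq> {}"
  using branch_has_leaf unfolding clade_def by blast

lemma clade_unique: "x \<in> V \<Longrightarrow> p \<in> clade x y \<Longrightarrow> p \<in> clade x y' \<Longrightarrow> y = y'"
  unfolding clade_def using branch_unique by blast

lemma clade_leaf: "{x, leaf q} \<in> E \<Longrightarrow> clade x (leaf q) = {q}"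
  unfolding clade_def using branch_leaf inj_leaf by (auto simp: inj_eq)

lemma clade_step: "{x, y} \<in> E \<Longrightarrow> y \<notin> range leaf \<Longrightarrow> clade x y = (\<Union>z\<in>nbrs y - {x}. clade y z)"
  unfolding clade_def using branch_step[of x y] by auto

lemma clade_cover:
  assumes "x \<in> V" "x \<notin> range leaf"
  shows "\<exists>y\<in>nbrs x. p \<in> clade x y"
proof -
  have "leaf p \<noteq> x" using assms(2) by auto
  then obtain y where "{x, y} \<in> E" "leaf p \<in> branch x y"
    using branch_cover[OF assms(1) leaf_in_V] by blast
  then show ?thesis by (auto simp: clade_def mem_nbrs_iff)
qed

lemma card_clade_step:
  assumes "{x, y} \<in> E" "y \<notin> range leaf"
  shows "card (clade x y) = (\<Sum>z\<in>nbrs y - {x}. card (clade y z))"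
proof -
  have "y \<in> V" using edge_endpoints[OF assms(1)] by simp
  then have "card (\<Union>z\<in>nbrs y - {x}. clade y z) = (\<Sum>z\<in>nbrs y - {x}. card (clade y z))"
    using clade_unique by (intro card_UN_disjoint) (auto simp: finite_nbrs)
  then show ?thesis using clade_step[OF assms] by simp
qed

lemma card_clade_pos: "{x, y} \<in> E \<Longrightarrow> 1 \<le> card (clade x y)"
  using clade_nonempty by (simp add: Suc_le_eq card_gt_0_iff)

lemma card_children_ge_2:
  assumes "{x, y} \<in> E" "y \<notin> range leaf"
  shows "2 \<le> card (nbrs y - {x})"
proof -
  have "x \<in> nbrs y" using assms(1) by (simp add: mem_nbrs_iff insert_commute)
  then show ?thesis
    using card_nbrs_internal[OF _ assms(2)] edge_endpoints[OF assms(1)] by (simp add: finite_nbrs)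
qed

lemma card_children_add_clade_le:
  assumes "{x, y} \<in> E" "y \<notin> range leaf" "z \<in> nbrs y - {x}"
  shows "card (nbrs y - {x}) + card (clade y z) \<le> card (clade x y) + 1"
proof -
  have pos: "\<And>z. z \<in> nbrs y - {x} \<Longrightarrow> 1 \<le> card (clade y z)"
    using card_clade_pos by (simp add: mem_nbrs_iff)
  have "card (nbrs y - {x}) + (card (clade y z) - 1) \<le> card (clade x y)"
    using card_plus_excess_le_sum[where f = "\<lambda>z. card (clade y z)", OF _ pos assms(3)]
    by (simp add: finite_nbrs card_clade_step[OF assms(1,2)])
  then show ?thesis using pos[OF assms(3)] by linarith
qed

lemma card_clade_internal:
  assumes "{x, y} \<in> E" "y \<notin> range leaf"
  shows "2 \<le> card (clade x y)"
proof -
  have "nbrs y - {x} \<noteq> {}" using card_children_ge_2[OF assms] by (metis card.empty not_numeral_le_zero)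
  then obtain z where z: "z \<in> nbrs y - {x}" by blast
  then have "1 \<le> card (clade y z)" using card_clade_pos by (simp add: mem_nbrs_iff)
  then show ?thesis
    using card_children_add_clade_le[OF assms z] card_children_ge_2[OF assms] by linarith
qed

lemma card_clade_one_imp_leaf:
  assumes "{x, y} \<in> E" "card (clade x y) = 1"
  shows "\<exists>q. y = leaf q \<and> clade x y = {q}"
proof -
  have "y \<in> range leaf"
  proof (rule ccontr)
    assume "y \<notin> range leaf"
    then show False using card_clade_internal[OF assms(1)] assms(2) by simp
  qed
  then show ?thesis using clade_leaf assms(1) by blast
qed

lemma children_are_leaves:
  assumes "x \<notin> range leaf" "{par, x} \<in> E" "card (clade par x) \<le> card (nbrs x - {par})"
    "y \<in> nbrs x - {par}"
  shows "\<exists>q. y = leaf q \<and> clade x y = {q}"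
proof -
  have "{x, y} \<in> E" using assms(4) by (simp add: mem_nbrs_iff)
  moreover from this have "card (clade x y) = 1"
    using card_children_add_clade_le[OF assms(2,1,4)] assms(3) card_clade_pos[of x y] by linarith
  ultimately show ?thesis by (rule card_clade_one_imp_leaf)
qed

lemma clade_card_two:
  assumes "x \<notin> range leaf" "{par, x} \<in> E" "card (clade par x) = 2"
  shows "\<exists>i j. i \<noteq> j \<and> nbrs x = {par, leaf i, leaf j} \<and> clade par x = {i, j}"
proof -
  let ?C = "nbrs x - {par}"
  have C: "2 \<le> card ?C" using card_children_ge_2[OF assms(2,1)] .
  then have "?C \<noteq> {}" by (metis card.empty not_numeral_le_zero)
  then obtain y0 where y0: "y0 \<in> ?C" by blast
  then have "1 \<le> card (clade x y0)" using card_clade_pos by (simp add: mem_nbrs_iff)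
  then have C2: "card ?C = 2" using card_children_add_clade_le[OF assms(2,1) y0] assms(3) C by linarith
  then obtain y1 y2 where y: "?C = {y1, y2}" "y1 \<noteq> y2" by (auto simp: card_2_iff)
  then have "y1 \<in> ?C" "y2 \<in> ?C" by auto
  then obtain i j where "y1 = leaf i" "clade x y1 = {i}" "y2 = leaf j" "clade x y2 = {j}"
    using children_are_leaves[OF assms(1,2)] assms(3) C2 by (metis order_refl)
  moreover have "par \<in> nbrs x" using assms(2) by (simp add: mem_nbrs_iff insert_commute)
  ultimately show ?thesis
    using y clade_step[OF assms(2,1)] by (intro exI[of _ i] exI[of _ j]) auto
qed

lemma clade_card_three_leaf_children:
  assumes "x \<notin> range leaf" "{par, x} \<in> E" "card (clade par x) = 3" "card (nbrs x - {par}) = 3"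
  shows "\<exists>k l m. k \<noteq> l \<and> k \<noteq> m \<and> l \<noteq> m \<and> nbrs x = {par, leaf k, leaf l, leaf m} \<and>
    clade par x = {k, l, m}"
proof -
  obtain y1 y2 y3 where y: "nbrs x - {par} = {y1, y2, y3}" "y1 \<noteq> y2" "y1 \<noteq> y3" "y2 \<noteq> y3"
    using assms(4) by (auto simp: card_3_iff)
  then have "y1 \<in> nbrs x - {par}" "y2 \<in> nbrs x - {par}" "y3 \<in> nbrs x - {par}" by auto
  then obtain k l m where "y1 = leaf k" "clade x y1 = {k}" "y2 = leaf l" "clade x y2 = {l}"
    "y3 = leaf m" "clade x y3 = {m}"
    using children_are_leaves[OF assms(1,2)] assms(3,4) by (metis order_refl)
  moreover have "par \<in> nbrs x" using assms(2) by (simp add: mem_nbrs_iff insert_commute)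
  ultimately show ?thesis
    using y clade_step[OF assms(2,1)] by (intro exI[of _ k] exI[of _ l] exI[of _ m]) auto
qed

lemma clade_card_three_two_children:
  assumes "x \<notin> range leaf" "{par, x} \<in> E" "card (clade par x) = 3" "card (nbrs x - {par}) = 2"
  shows "\<exists>k y l m. y \<notin> range leaf \<and> y \<noteq> par \<and> nbrs x = {par, leaf k, y} \<and>
    nbrs y = {x, leaf l, leaf m} \<and> k \<noteq> l \<and> k \<noteq> m \<and> l \<noteq> m \<and> clade par x = {k, l, m}"
proof -
  let ?C = "nbrs x - {par}"
  have edge: "{x, y} \<in> E" if "y \<in> ?C" for y using that by (simp add: mem_nbrs_iff)
  have le2: "card (clade x y) \<le> 2" if "y \<in> ?C" for y
    using card_children_add_clade_le[OF assms(2,1) that] assms(3,4) by simp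
  obtain y1 y2 where y: "?C = {y1, y2}" "y1 \<noteq> y2" using assms(4) by (auto simp: card_2_iff)
  then have "card (clade x y1) + card (clade x y2) = 3" using card_clade_step[OF assms(2,1)] assms(3) by simp
  moreover have "card (clade x y1) \<le> 2" "card (clade x y2) \<le> 2" using le2 y(1) by auto
  ultimately obtain yk y where yy: "?C = {yk, y}" "yk \<noteq> y" "card (clade x yk) = 1" "card (clade x y) = 2"
  proof (cases "card (clade x y1) = 1")
    case True then show ?thesis using that[of y1 y2] y \<open>_ + _ = 3\<close> by simp
  next
    case False then show ?thesis
      using that[of y2 y1] y \<open>_ + _ = 3\<close> \<open>card (clade x y1) \<le> 2\<close> \<open>card (clade x y2) \<le> 2\<close>
      by (simp add: insert_commute)
  qed
  obtain k where k: "yk = leaf k" "clade x yk = {k}"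
    using card_clade_one_imp_leaf[OF edge yy(3)] yy(1) by blast
  have ey: "{x, y} \<in> E" using edge yy(1) by blast
  have y_int: "y \<notin> range leaf"
  proof
    assume "y \<in> range leaf"
    then have "card (clade x y) = 1" using clade_leaf ey by force
    then show False using yy(4) by simp
  qed
  obtain l m where lm: "l \<noteq> m" "nbrs y = {x, leaf l, leaf m}" "clade x y = {l, m}"
    using clade_card_two[OF y_int ey yy(4)] by blast
  have "x \<in> V" using edge_endpoints[OF assms(2)] by simp
  then have "k \<notin> {l, m}" using clade_unique k(2) lm(3) yy(2) by blast
  moreover have "par \<in> nbrs x" using assms(2) by (simp add: mem_nbrs_iff insert_commute)
  then have "nbrs x = {par, leaf k, y}" using yy(1) k(1) by blast
  moreover have "clade par x = {k, l, m}" using clade_step[OF assms(2,1)] yy(1) k(2) lm(3) by auto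
  moreover have "y \<noteq> par" using yy(1) by blast
  ultimately show ?thesis using y_int lm(1,2) by blast
qed

lemma clade_card_three:
  assumes "x \<notin> range leaf" "{par, x} \<in> E" "card (clade par x) = 3"
  shows "(\<exists>k l m. k \<noteq> l \<and> k \<noteq> m \<and> l \<noteq> m \<and>
            nbrs x = {par, leaf k, leaf l, leaf m} \<and> clade par x = {k, l, m}) \<or>
         (\<exists>k y l m. y \<notin> range leaf \<and> y \<noteq> par \<and> nbrs x = {par, leaf k, y} \<and>
            nbrs y = {x, leaf l, leaf m} \<and> k \<noteq> l \<and> k \<noteq> m \<and> l \<noteq> m \<and> clade par x = {k, l, m})"
proof -
  have C: "2 \<le> card (nbrs x - {par})" using card_children_ge_2[OF assms(2,1)] .
  then have "nbrs x - {par} \<noteq> {}" by (metis card.empty not_numeral_le_zero)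
  then obtain y0 where y0: "y0 \<in> nbrs x - {par}" by blast
  then have "1 \<le> card (clade x y0)" using card_clade_pos by (simp add: mem_nbrs_iff)
  then have "card (nbrs x - {par}) \<le> 3"
    using card_children_add_clade_le[OF assms(2,1) y0] assms(3) by linarith
  then consider "card (nbrs x - {par}) = 3" | "card (nbrs x - {par}) = 2" using C by linarith
  then show ?thesis
    using clade_card_three_leaf_children[OF assms] clade_card_three_two_children[OF assms] by cases blast+
qed

lemma clades_partition:
  assumes "u \<notin> range leaf" "{u, v} \<in> E"
  shows "clade v u \<union> clade u v = UNIV" "clade v u \<inter> clade u v = {}"
proof -
  have "u \<in> V" using edge_endpoints[OF assms(2)] by simp
  have step: "clade v u = (\<Union>y\<in>nbrs u - {v}. clade u y)"
    using clade_step[OF _ assms(1)] assms(2) by (simp add: insert_commute)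
  show "clade v u \<union> clade u v = UNIV"
  proof (intro set_eqI iffI)
    fix p
    obtain y where "y \<in> nbrs u" "p \<in> clade u y" using clade_cover[OF \<open>u \<in> V\<close> assms(1)] by blast
    then show "p \<in> clade v u \<union> clade u v" using step by (cases "y = v") auto
  qed simp
  show "clade v u \<inter> clade u v = {}"
    using step clade_unique[OF \<open>u \<in> V\<close>] by blast
qed

lemma card_clades:
  assumes "u \<notin> range leaf" "{u, v} \<in> E"
  shows "card (clade v u) + card (clade u v) = 5"
  using card_Un_disjoint[of "clade v u" "clade u v"] clades_partition[OF assms] by simp

lemma five_taxa_of_clades:
  assumes "u \<notin> range leaf" "{u, v} \<in> E" "clade v u = {i, j}" "clade u v = {k, l, m}"
    "i \<noteq> j" "k \<noteq> l" "k \<noteq> m" "l \<noteq> m"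
  shows "five_taxa i j k l m"
  using clades_partition[OF assms(1,2)] assms(3-) unfolding five_taxa_def by auto

definition one_split_shape :: "'v \<Rightarrow> 'v \<Rightarrow> 5 \<Rightarrow> 5 \<Rightarrow> 5 \<Rightarrow> 5 \<Rightarrow> 5 \<Rightarrow> bool" where
  "one_split_shape u v i j k l m \<longleftrightarrow> {u, v} \<in> E \<and> u \<notin> range leaf \<and> v \<notin> range leaf \<and>
     nbrs u = {v, leaf i, leaf j} \<and> nbrs v = {u, leaf k, leaf l, leaf m} \<and> five_taxa i j k l m"

definition caterpillar_shape :: "'v \<Rightarrow> 'v \<Rightarrow> 'v \<Rightarrow> 5 \<Rightarrow> 5 \<Rightarrow> 5 \<Rightarrow> 5 \<Rightarrow> 5 \<Rightarrow> bool" where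
  "caterpillar_shape u v y i j k l m \<longleftrightarrow> {u, v} \<in> E \<and> u \<notin> range leaf \<and> v \<notin> range leaf \<and>
     y \<notin> range leaf \<and> y \<noteq> u \<and> nbrs u = {v, leaf i, leaf j} \<and> nbrs v = {u, leaf k, y} \<and>
     nbrs y = {v, leaf l, leaf m} \<and> five_taxa i j k l m"

lemma internal_edge_shapes:
  assumes "{u, v} \<in> E" "u \<notin> range leaf" "v \<notin> range leaf" "card (clade v u) = 2"
  shows "(\<exists>i j k l m. one_split_shape u v i j k l m) \<or> (\<exists>y i j k l m. caterpillar_shape u v y i j k l m)"
proof -
  have vu: "{v, u} \<in> E" using assms(1) by (simp add: insert_commute)
  obtain i j where ij: "i \<noteq> j" "nbrs u = {v, leaf i, leaf j}" "clade v u = {i, j}"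
    using clade_card_two[OF assms(2) vu assms(4)] by blast
  have "card (clade u v) = 3" using card_clades[OF assms(2,1)] assms(4) by simp
  from clade_card_three[OF assms(3,1) this] show ?thesis
  proof (elim disjE exE conjE)
    fix k l m
    assume h: "k \<noteq> l" "k \<noteq> m" "l \<noteq> m" "nbrs v = {u, leaf k, leaf l, leaf m}" "clade u v = {k, l, m}"
    have "five_taxa i j k l m" using five_taxa_of_clades[OF assms(2,1) ij(3) h(5) ij(1) h(1-3)] .
    then have "one_split_shape u v i j k l m"
      unfolding one_split_shape_def using assms(1-3) ij(2) h(4) by simp
    then show ?thesis by blast
  next
    fix k y l m
    assume h: "y \<notin> range leaf" "y \<noteq> u" "nbrs v = {u, leaf k, y}" "nbrs y = {v, leaf l, leaf m}"
      "k \<noteq> l" "k \<noteq> m" "l \<noteq> m" "clade u v = {k, l, m}"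
    have "five_taxa i j k l m" using five_taxa_of_clades[OF assms(2,1) ij(3) h(8) ij(1) h(5-7)] .
    then have "caterpillar_shape u v y i j k l m"
      unfolding caterpillar_shape_def using assms(1-3) ij(2) h(1-4) by simp
    then show ?thesis by blast
  qed
qed

lemma non_star_shapes:
  assumes "\<exists>f\<in>E. internal_edge leaf f"
  shows "(\<exists>u v i j k l m. one_split_shape u v i j k l m) \<or>
    (\<exists>u v y i j k l m. caterpillar_shape u v y i j k l m)"
proof -
  obtain f where f: "f \<in> E" "internal_edge leaf f" using assms by blast
  then obtain a b where "f = {a, b}" using edges_subset by blast
  with f have ab: "{a, b} \<in> E" "a \<notin> range leaf" "b \<notin> range leaf"
    unfolding internal_edge_def by auto
  have ba: "{b, a} \<in> E" using ab(1) by (simp add: insert_commute)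
  have "2 \<le> card (clade b a)" "2 \<le> card (clade a b)"
    using card_clade_internal ab ba by blast+
  then consider "card (clade b a) = 2" | "card (clade a b) = 2"
    using card_clades[OF ab(2,1)] by linarith
  then show ?thesis
    by cases (use internal_edge_shapes[OF ab] internal_edge_shapes[OF ba ab(3,2)] in blast)+
qed

lemma realizes_diag: "realizes E w leaf T \<Longrightarrow> T$p$p = 0"
  unfolding realizes_def by (metis path_length_singleton spath_singleton)

lemma realizes_two_edges:
  assumes "realizes E w leaf T" "{x, leaf p} \<in> E" "{x, leaf q} \<in> E" "p \<noteq> q"
  shows "T$p$q = w {x, leaf p} + w {x, leaf q}"
proof -
  have "leaf p \<noteq> x" "x \<noteq> leaf q" "leaf p \<noteq> leaf q"
    using edge_endpoints assms(2-4) inj_leaf by (auto simp: inj_eq)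
  then have "spath E [leaf p, x, leaf q] (leaf p) (leaf q)"
    using assms(2,3) by (auto simp: spath_Cons_Cons insert_commute)
  then show ?thesis
    using assms(1) unfolding realizes_def by (simp add: path_length_Cons_Cons insert_commute)
qed

lemma realizes_three_edges:
  assumes "realizes E w leaf T" "{x, leaf p} \<in> E" "{x, y} \<in> E" "{y, leaf q} \<in> E"
    "x \<notin> range leaf" "y \<notin> range leaf" "p \<noteq> q"
  shows "T$p$q = w {x, leaf p} + w {x, y} + w {y, leaf q}"
proof -
  have "x \<noteq> y" "leaf p \<noteq> leaf q" using edge_endpoints[OF assms(3)] assms(7) inj_leaf by (auto simp: inj_eq)
  then have "spath E [leaf p, x, y, leaf q] (leaf p) (leaf q)"
    using assms(2-6) by (auto simp: spath_Cons_Cons insert_commute)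
  then show ?thesis
    using assms(1) unfolding realizes_def by (simp add: path_length_Cons_Cons insert_commute)
qed

lemma realizes_four_edges:
  assumes "realizes E w leaf T" "{x, leaf p} \<in> E" "{x, y} \<in> E" "{y, z} \<in> E" "{z, leaf q} \<in> E"
    "x \<notin> range leaf" "y \<notin> range leaf" "z \<notin> range leaf" "x \<noteq> z" "p \<noteq> q"
  shows "T$p$q = w {x, leaf p} + w {x, y} + w {y, z} + w {z, leaf q}"
proof -
  have "x \<noteq> y" "y \<noteq> z" "leaf p \<noteq> leaf q"
    using edge_endpoints[OF assms(3)] edge_endpoints[OF assms(4)] assms(10) inj_leaf by (auto simp: inj_eq)
  then have "spath E [leaf p, x, y, z, leaf q] (leaf p) (leaf q)"
    using assms(2-9) by (auto simp: spath_Cons_Cons insert_commute)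
  then show ?thesis
    using assms(1) unfolding realizes_def by (simp add: path_length_Cons_Cons insert_commute add.assoc)
qed

lemma caterpillar_not_mixture:
  assumes "realizes E w leaf T" "caterpillar_shape u v y i j k l m"
  shows "\<not> (\<exists>D Db. star_metric D \<and> star_metric Db \<and> T = tmix D Db)"
proof
  assume "\<exists>D Db. star_metric D \<and> star_metric Db \<and> T = tmix D Db"
  then obtain a b where T: "T = tmix (star_matrix a) (star_matrix b)" unfolding star_metric_iff by blast
  interpret five_taxa i j k l m using assms(2) unfolding caterpillar_shape_def by blast
  have nl: "u \<notin> range leaf" "v \<notin> range leaf" "y \<notin> range leaf" and "u \<noteq> y"
    using assms(2) unfolding caterpillar_shape_def by auto
  have E: "{u, leaf i} \<in> E" "{u, leaf j} \<in> E" "{u, v} \<in> E" "{v, leaf k} \<in> E" "{v, y} \<in> E"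
    "{y, leaf l} \<in> E" "{y, leaf m} \<in> E"
    using assms(2) unfolding caterpillar_shape_def by (auto simp: set_eq_iff mem_nbrs_iff)
  have mix: "T$p$q = max (a$p + a$q) (b$p + b$q)" if "p \<noteq> q" for p q
    using that unfolding T tmix_def by simp
  have "0 < w {u, v}" "0 < w {v, y}" using E weight_pos by auto
  from caterpillar_max_equations_unsolvable[OF this, of "a$i" "a$j" "b$i" "b$j" "w {u, leaf i}" "w {u, leaf j}"
      "a$k" "b$k" "w {v, leaf k}" "a$l" "b$l" "w {y, leaf l}" "a$m" "b$m" "w {y, leaf m}"]
  show False
    using distinct mix[of i j] mix[of i k] mix[of i l] mix[of i m] mix[of j k] mix[of j l] mix[of j m]
      mix[of k l] mix[of k m] mix[of l m]
      realizes_two_edges[OF assms(1) E(1,2)] realizes_two_edges[OF assms(1) E(6,7)]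
      realizes_three_edges[OF assms(1) E(1,3,4) nl(1,2)] realizes_three_edges[OF assms(1) E(2,3,4) nl(1,2)]
      realizes_three_edges[OF assms(1) E(4,5,6) nl(2,3)] realizes_three_edges[OF assms(1) E(4,5,7) nl(2,3)]
      realizes_four_edges[OF assms(1) E(1,3,5,6) nl \<open>u \<noteq> y\<close>]
      realizes_four_edges[OF assms(1) E(1,3,5,7) nl \<open>u \<noteq> y\<close>]
      realizes_four_edges[OF assms(1) E(2,3,5,6) nl \<open>u \<noteq> y\<close>]
      realizes_four_edges[OF assms(1) E(2,3,5,7) nl \<open>u \<noteq> y\<close>]
    by simp
qed

definition pendant_weight :: "'v \<Rightarrow> 'v \<Rightarrow> 5 \<Rightarrow> 5 \<Rightarrow> 5 \<Rightarrow> real" where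
  "pendant_weight u v i j p = w {if p \<in> {i, j} then u else v, leaf p}"

lemma one_split_pendant_edge:
  assumes "one_split_shape u v i j k l m"
  shows "{if p \<in> {i, j} then u else v, leaf p} \<in> E"
proof -
  interpret five_taxa i j k l m using assms unfolding one_split_shape_def by blast
  have "{u, leaf i} \<in> E" "{u, leaf j} \<in> E" "{v, leaf k} \<in> E" "{v, leaf l} \<in> E" "{v, leaf m} \<in> E"
    using assms unfolding one_split_shape_def by (auto simp: set_eq_iff mem_nbrs_iff)
  then show ?thesis using distinct all_taxa by (cases "p \<in> {i, j}") auto
qed

lemma one_split_weights_pos:
  assumes "one_split_shape u v i j k l m"
  shows "0 < w {u, v}" "\<forall>p. 0 < pendant_weight u v i j p"
  using assms one_split_pendant_edge[OF assms] weight_pos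
  unfolding one_split_shape_def pendant_weight_def by auto

lemma one_split_metric:
  assumes "realizes E w leaf T" "one_split_shape u v i j k l m"
  shows "T = split_metric (pendant_weight u v i j) (w {u, v}) {i, j}"
proof -
  define att where "att p = (if p \<in> {i, j} then u else v)" for p
  have pendant: "{att p, leaf p} \<in> E" "pendant_weight u v i j p = w {att p, leaf p}" for p
    using one_split_pendant_edge[OF assms(2)] unfolding att_def pendant_weight_def by simp_all
  have uv: "{u, v} \<in> E" "u \<noteq> v" "att p \<notin> range leaf" for p
    using assms(2) edge_endpoints unfolding one_split_shape_def att_def by auto
  have "T$p$q = split_metric (pendant_weight u v i j) (w {u, v}) {i, j} $ p $ q" for p q
  proof (cases "p = q")
    case True then show ?thesis using realizes_diag[OF assms(1)] by simp
  next
    case False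
    show ?thesis
    proof (cases "(p \<in> {i, j}) = (q \<in> {i, j})")
      case True
      then have "att p = att q" by (simp add: att_def)
      then show ?thesis
        using realizes_two_edges[OF assms(1) pendant(1)[of p] _ False] pendant(1,2)
        unfolding split_metric_nth if_not_P[OF False] if_P[OF True] by simp
    next
      case side: False
      then have "{att p, att q} = {u, v}" by (auto simp: att_def)
      then show ?thesis
        using realizes_three_edges[OF assms(1) pendant(1)[of p] _ pendant(1)[of q] uv(3,3) False]
          pendant(2) uv(1)
        unfolding split_metric_nth if_not_P[OF False] if_not_P[OF side] by simp
    qed
  qed
  then show ?thesis by (simp add: vec_eq_iff)
qed

lemma one_split_vertices:
  assumes "one_split_shape u v i j k l m"
  shows "V \<subseteq> {u, v} \<union> range leaf"
proof
  fix x assume "x \<in> V"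
  have u: "u \<in> V" "nbrs u = {v, leaf i, leaf j}" and nbrs_v: "nbrs v = {u, leaf k, leaf l, leaf m}"
    using assms edge_endpoints unfolding one_split_shape_def by auto
  have branch_v: "branch u v \<subseteq> insert v (range leaf)"
  proof -
    have "branch v z \<subseteq> range leaf" if "z \<in> nbrs v - {u}" for z
      using that nbrs_v branch_leaf by (auto simp: mem_nbrs_iff)
    moreover have "{u, v} \<in> E" using u(2) by (simp add: mem_nbrs_iff[symmetric])
    ultimately show ?thesis using branch_step[of u v] by blast
  qed
  show "x \<in> {u, v} \<union> range leaf"
  proof (cases "x = u")
    case False
    then obtain y where "{u, y} \<in> E" "x \<in> branch u y" using branch_cover[OF u(1) \<open>x \<in> V\<close>] by blast
    moreover have "y \<in> {v, leaf i, leaf j}" using calculation(1) u(2) by (simp add: mem_nbrs_iff[symmetric])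
    ultimately show ?thesis using branch_v branch_leaf by auto
  qed simp
qed

lemma one_split_internal_edge:
  assumes "one_split_shape u v i j k l m" "f \<in> E" "internal_edge leaf f"
  shows "f = {u, v}"
proof -
  obtain a b where ab: "f = {a, b}" "a \<noteq> b" "a \<in> V" "b \<in> V" using assms(2) edges_subset by blast
  then have "a \<in> {u, v}" "b \<in> {u, v}"
    using one_split_vertices[OF assms(1)] assms(3) unfolding internal_edge_def by auto
  then show ?thesis using ab(1,2) by auto
qed

lemma one_split_cherry_cond:
  assumes "one_split_shape u v i j k l m"
    and "w {u, v} < pendant_weight u v i j i" "w {u, v} < pendant_weight u v i j j"
  shows "one_internal_cherry_cond E w leaf"
proof -
  interpret five_taxa i j k l m using assms(1) unfolding one_split_shape_def by blast
  have shape: "{u, v} \<in> E" "u \<notin> range leaf" "v \<notin> range leaf" "nbrs u = {v, leaf i, leaf j}"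
    using assms(1) unfolding one_split_shape_def by auto
  have "{u, leaf i} \<in> E" "{u, leaf j} \<in> E" using shape(4) by (auto simp: set_eq_iff mem_nbrs_iff)
  moreover have "\<forall>p. {u, leaf p} \<in> E \<longrightarrow> p = i \<or> p = j"
    using shape(3,4) inj_leaf by (auto simp: set_eq_iff mem_nbrs_iff inj_eq)
  moreover have "internal_edge leaf {u, v}" using shape(2,3) unfolding internal_edge_def by auto
  moreover have "\<forall>f\<in>E. internal_edge leaf f \<longrightarrow> f = {u, v}"
    using one_split_internal_edge[OF assms(1)] by blast
  moreover have "w {u, v} < w {u, leaf i}" "w {u, v} < w {u, leaf j}"
    using assms(2,3) by (simp_all add: pendant_weight_def)
  ultimately show ?thesis
    unfolding one_internal_cherry_cond_def using shape(1) distinct(1) by blast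
qed

lemma cherry_vertex_nbrs:
  assumes "{u, v} \<in> E" "u \<notin> range leaf" "\<forall>f\<in>E. internal_edge leaf f \<longrightarrow> f = {u, v}"
    "{u, leaf i} \<in> E" "{u, leaf j} \<in> E" "\<forall>p. {u, leaf p} \<in> E \<longrightarrow> p = i \<or> p = j"
  shows "nbrs u = {v, leaf i, leaf j}"
proof (intro equalityI subsetI)
  fix y assume "y \<in> nbrs u"
  then have uy: "{u, y} \<in> E" by (simp add: mem_nbrs_iff)
  show "y \<in> {v, leaf i, leaf j}"
  proof (cases "y \<in> range leaf")
    case True then show ?thesis using assms(6) uy by auto
  next
    case False
    then have "{u, y} = {u, v}" using assms(2,3) uy unfolding internal_edge_def by auto
    then show ?thesis by (auto simp: doubleton_eq_iff)
  qed
qed (use assms(1,4,5) in \<open>auto simp: mem_nbrs_iff\<close>)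

lemma cherry_cond_one_split:
  assumes "one_internal_cherry_cond E w leaf"
  shows "\<exists>u v i j k l m. one_split_shape u v i j k l m \<and>
    w {u, v} < pendant_weight u v i j i \<and> w {u, v} < pendant_weight u v i j j"
proof -
  obtain u v i j where c: "{u, v} \<in> E" "internal_edge leaf {u, v}"
    "\<forall>f\<in>E. internal_edge leaf f \<longrightarrow> f = {u, v}" "i \<noteq> j" "{u, leaf i} \<in> E" "{u, leaf j} \<in> E"
    "\<forall>p. {u, leaf p} \<in> E \<longrightarrow> p = i \<or> p = j" "w {u, v} < w {u, leaf i}" "w {u, v} < w {u, leaf j}"
    using assms unfolding one_internal_cherry_cond_def by blast
  have nl: "u \<notin> range leaf" "v \<notin> range leaf" using c(2) unfolding internal_edge_def by auto
  have nbrs_u: "nbrs u = {v, leaf i, leaf j}" using cherry_vertex_nbrs[OF c(1) nl(1) c(3,5,6,7)] .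
  then have "nbrs u - {v} = {leaf i, leaf j}" using nl(2) by auto
  then have clade_vu: "clade v u = {i, j}"
    using clade_step[OF _ nl(1), of v] c(1,5,6) clade_leaf by (auto simp: insert_commute)
  then have "card (clade u v) = 3" using card_clades[OF nl(1) c(1)] c(4) by simp
  from clade_card_three[OF nl(2) c(1) this] show ?thesis
  proof (elim disjE exE conjE)
    fix k l m
    assume h: "k \<noteq> l" "k \<noteq> m" "l \<noteq> m" "nbrs v = {u, leaf k, leaf l, leaf m}" "clade u v = {k, l, m}"
    have "five_taxa i j k l m" using five_taxa_of_clades[OF nl(1) c(1) clade_vu h(5) c(4) h(1-3)] .
    then have "one_split_shape u v i j k l m"
      unfolding one_split_shape_def using c(1) nl nbrs_u h(4) by simp
    moreover have "w {u, v} < pendant_weight u v i j i" "w {u, v} < pendant_weight u v i j j"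
      using c(8,9) by (simp_all add: pendant_weight_def)
    ultimately show ?thesis by blast
  next
    fix k y l m assume "y \<notin> range leaf" "y \<noteq> u" "nbrs v = {u, leaf k, y}"
    then have "{v, y} \<in> E" "internal_edge leaf {v, y}"
      using nl(2) unfolding internal_edge_def by (auto simp: set_eq_iff mem_nbrs_iff)
    then have "{v, y} = {u, v}" using c(3) by blast
    then show ?thesis using \<open>y \<noteq> u\<close> edge_endpoints[OF c(1)] by (auto simp: doubleton_eq_iff)
  qed
qed

lemma mixture_imp_cherry_cond:
  assumes "realizes E w leaf T" "\<exists>f\<in>E. internal_edge leaf f"
    and mixture: "\<exists>D Db. star_metric D \<and> star_metric Db \<and> T = tmix D Db"
  shows "one_internal_cherry_cond E w leaf"
  using non_star_shapes[OF assms(2)]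
proof (elim disjE exE)
  fix u v i j k l m assume shape: "one_split_shape u v i j k l m"
  interpret five_taxa i j k l m using shape unfolding one_split_shape_def by blast
  obtain a b where "\<forall>p. 0 < a$p" "\<forall>p. 0 < b$p" "tmix (star_matrix a) (star_matrix b) = T"
    using mixture unfolding star_metric_iff by blast
  then have "w {u, v} < pendant_weight u v i j i \<and> w {u, v} < pendant_weight u v i j j"
    using mixture_pendants_exceed one_split_weights_pos(1)[OF shape] one_split_metric[OF assms(1) shape]
    by simp
  then show ?thesis using one_split_cherry_cond[OF shape] by blast
qed (use caterpillar_not_mixture[OF assms(1)] mixture in blast)

lemma cherry_cond_fiber_decomposition:
  assumes "realizes E w leaf T" "one_internal_cherry_cond E w leaf"
  shows "\<exists>P :: nat \<Rightarrow> ((real^5^5) \<times> (real^5^5)) set.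
    (\<forall>k<4. polygon2 (P k)) \<and> fiber T = (\<Union>k<4. P k \<union> prod.swap ` P k) \<and>
    (\<forall>k<4. \<forall>l<4. k \<noteq> l \<longrightarrow> (P k \<union> prod.swap ` P k) \<inter> (P l \<union> prod.swap ` P l) = {})"
proof -
  obtain u v i j k l m where shape: "one_split_shape u v i j k l m"
    and gt: "w {u, v} < pendant_weight u v i j i" "w {u, v} < pendant_weight u v i j j"
    using cherry_cond_one_split[OF assms(2)] by blast
  interpret five_taxa i j k l m using shape unfolding one_split_shape_def by blast
  show ?thesis unfolding one_split_metric[OF assms(1) shape]
    by (rule split_metric_fiber_decomposition[OF one_split_weights_pos[OF shape] gt])
qed

lemma cherry_cond_imp_mixture:
  assumes "realizes E w leaf T" "one_internal_cherry_cond E w leaf"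
  shows "\<exists>D Db. star_metric D \<and> star_metric Db \<and> T = tmix D Db"
proof -
  from cherry_cond_fiber_decomposition[OF assms]
  obtain P :: "nat \<Rightarrow> ((real^5^5) \<times> (real^5^5)) set" where P: "(\<forall>k<4. polygon2 (P k)) \<and>
    fiber T = (\<Union>k<4. P k \<union> prod.swap ` P k) \<and>
    (\<forall>k<4. \<forall>l<4. k \<noteq> l \<longrightarrow> (P k \<union> prod.swap ` P k) \<inter> (P l \<union> prod.swap ` P l) = {})" ..
  then have "polygon2 (P 0)" by simp
  then have "P 0 \<noteq> {}" by (rule polygon2_nonempty)
  moreover have "P 0 \<subseteq> fiber T" using P by (auto intro!: bexI[of _ 0])
  ultimately have "fiber T \<noteq> {}" by blast
  then show ?thesis unfolding fiber_def by fastforce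
qed

end

theorem lemma2p7:
  fixes V :: "'v set" and E :: "'v set set" and w :: "'v set \<Rightarrow> real"
    and leaf :: "5 \<Rightarrow> 'v" and T :: "real^5^5"
  assumes tree: "weighted_phylo_tree V E w leaf"
    and real: "realizes E w leaf T"
    and nonstar: "\<exists>f\<in>E. internal_edge leaf f"
  shows "((\<exists>D Db. star_metric D \<and> star_metric Db \<and> T = tmix D Db)
           \<longleftrightarrow> one_internal_cherry_cond E w leaf) \<and>
         (one_internal_cherry_cond E w leaf \<longrightarrow>
         (\<exists>P :: nat \<Rightarrow> ((real^5^5) \<times> (real^5^5)) set.
            (\<forall>k<4. polygon2 (P k)) \<and>
            fiber T = (\<Union>k<4. P k \<union> prod.swap ` P k) \<and>
            (\<forall>k<4. \<forall>l<4. k \<noteq> l \<longrightarrow>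
               (P k \<union> prod.swap ` P k) \<inter> (P l \<union> prod.swap ` P l) = {})))"
proof
  interpret phylo_tree V E w leaf by (rule phylo_tree.intro) (rule tree)
  show "(\<exists>D Db. star_metric D \<and> star_metric Db \<and> T = tmix D Db) \<longleftrightarrow> one_internal_cherry_cond E w leaf"
    using mixture_imp_cherry_cond[OF real nonstar] cherry_cond_imp_mixture[OF real] by blast
  show "one_internal_cherry_cond E w leaf \<longrightarrow> (\<exists>P :: nat \<Rightarrow> ((real^5^5) \<times> (real^5^5)) set.
      (\<forall>k<4. polygon2 (P k)) \<and> fiber T = (\<Union>k<4. P k \<union> prod.swap ` P k) \<and>
      (\<forall>k<4. \<forall>l<4. k \<noteq> l \<longrightarrow> (P k \<union> prod.swap ` P k) \<inter> (P l \<union> prod.swap ` P l) = {}))"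
    using cherry_cond_fiber_decomposition[OF real] by blast
qed

end
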